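(* Let $k \geq 0$ be an integer and let $t$ be an indeterminate. Define polynomials $A^{k,\ell}(t)$ for integers $\ell \geq 0$ by $A^{k,0}(t) = 1$ and, for $\ell \geq 1$, $$A^{k,\ell}(t) = (1-t^{k+\ell})\, A^{k,\ell-1}(t) + t^{\ell(k+1)} \begin{bmatrix} k+\ell \\ \ell \end{bmatrix}_t .$$ Then for every $\ell \geq 0$, $$A^{k,\ell}(t) = 1 + \sum_{i=1}^{\ell} t^{i(k+\ell+1)} \begin{bmatrix} k \\ i \end{bmatrix}_t \sum_{j=0}^{\ell-i} t^{j(k-i+1)} \begin{bmatrix} i+j-1 \\ j \end{bmatrix}_t .$$
   Context: For integers $a,b$, the $t$-binomial coefficient is $\begin{bmatrix} a \\ b \end{bmatrix}_t = \frac{(t;t)_a}{(t;t)_b (t;t)_{a-b}}$ when $0 \le b \le a$ and $0$ otherwise, where $(x;t)_n = (1-x)(1-xt)(1-xt^2)\cdots(1-xt^{n-1})$ and $(x;t)_0=1$. *)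

theory Defs
  imports "HOL-Computational_Algebra.Polynomial"
begin

definition tvar :: "int poly" where "tvar = [:0, 1:]"

definition qpoch :: "int poly \<Rightarrow> nat \<Rightarrow> int poly" where
  "qpoch x n = (\<Prod>m<n. 1 - x * tvar ^ m)"

text \<open>t-binomial coefficient for integers a, b (exact polynomial division).\<close>
definition qbinom :: "int \<Rightarrow> int \<Rightarrow> int poly" where
  "qbinom a b = (if 0 \<le> b \<and> b \<le> a
     then qpoch tvar (nat a) div (qpoch tvar (nat b) * qpoch tvar (nat (a - b)))
     else 0)"

fun A :: "nat \<Rightarrow> nat \<Rightarrow> int poly" where
  "A k 0 = 1"
| "A k (Suc l) = (1 - tvar ^ (k + Suc l)) * A k l
     + tvar ^ (Suc l * (k + 1)) * qbinom (int (k + Suc l)) (int (Suc l))"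

end

theory Submission
  imports Defs
begin

(* Write the right-hand side as A_closed k l = sum over i <= l of t^(i(k+l+1)) Z_i, with
   Z_i = A_coeff k l i, and show that it satisfies the recurrence defining A.  The inner sums obey a Pascal-type rule in i, which
   makes the coefficients almost geometric:
     (1 - t^(i+1)) Z_(i+1) = Z_i - t^((k-i)(l-i)) [k,i] [l,l-i].
   Hence multiplying A_closed k l by 1 - t^(k+l+1) telescopes, and what is left, together with
   the new terms created by passing from l to l+1, is t^((l+1)(k+1)) [k+l+1,l+1] expanded by the
   q-Vandermonde identity. *)

fun gauss_binom :: "nat \<Rightarrow> nat \<Rightarrow> int poly" where
  "gauss_binom n 0 = 1"
| "gauss_binom 0 (Suc m) = 0"
| "gauss_binom (Suc n) (Suc m) = gauss_binom n m + tvar ^ Suc m * gauss_binom n (Suc m)"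

lemma gauss_binom_eq_0: "n < m \<Longrightarrow> gauss_binom n m = 0"
  by (induction n m rule: gauss_binom.induct) auto

lemma gauss_binom_self [simp]: "gauss_binom n n = 1"
  by (induction n) (auto simp: gauss_binom_eq_0)

(* Lets exponent identities be proved under i \<le> k only, where truncated subtraction is harmless. *)
lemma mult_gauss_binom_cong:
  "(i \<le> k \<Longrightarrow> x = y) \<Longrightarrow> x * gauss_binom k i = y * gauss_binom k i"
  by (cases "i \<le> k") (auto simp: gauss_binom_eq_0)

lemma one_minus_tvar_power_neq_0: "0 < n \<Longrightarrow> 1 - tvar ^ n \<noteq> 0"
proof
  assume "0 < n" "1 - tvar ^ n = 0"
  then have "coeff (1 - tvar ^ n) 0 = 0" by simp
  with \<open>0 < n\<close> show False by (simp add: tvar_def coeff_0_power zero_power)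
qed

lemma qpoch_tvar_Suc: "qpoch tvar (Suc n) = qpoch tvar n * (1 - tvar ^ Suc n)"
  by (simp add: qpoch_def)

lemma qpoch_tvar_neq_0: "qpoch tvar n \<noteq> 0"
  using one_minus_tvar_power_neq_0 by (simp add: qpoch_def flip: power_Suc)

lemma gauss_binom_mult_qpoch:
  "m \<le> n \<Longrightarrow> gauss_binom n m * qpoch tvar m * qpoch tvar (n - m) = qpoch tvar n"
proof (induction n arbitrary: m)
  case 0
  then show ?case by (simp add: qpoch_def)
next
  case (Suc n)
  show ?case
  proof (cases m)
    case 0
    then show ?thesis by (simp add: qpoch_def)
  next
    case (Suc m')
    show ?thesis
    proof (cases "m' = n")
      case True
      with Suc show ?thesis by (simp add: qpoch_def)
    next
      case False
      with Suc \<open>m \<le> Suc n\<close> obtain d where d: "n - m' = Suc d" and n: "n = m' + Suc d"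
        by (metis Suc_diff_Suc Suc_le_mono le_add_diff_inverse le_neq_implies_less)
      have IH1: "gauss_binom n m' * qpoch tvar m' * qpoch tvar (Suc d) = qpoch tvar n"
        using Suc.IH[of m'] d by simp
      have IH2: "gauss_binom n (Suc m') * qpoch tvar (Suc m') * qpoch tvar d = qpoch tvar n"
        using Suc.IH[of "Suc m'"] d n by simp
      have "gauss_binom (Suc n) m * qpoch tvar m * qpoch tvar (Suc n - m)
          = (gauss_binom n m' + tvar ^ Suc m' * gauss_binom n (Suc m'))
            * qpoch tvar (Suc m') * qpoch tvar (Suc d)"
        using Suc d by simp
      also have "\<dots> = (gauss_binom n m' * qpoch tvar m' * qpoch tvar (Suc d)) * (1 - tvar ^ Suc m')
            + tvar ^ Suc m' * (gauss_binom n (Suc m') * qpoch tvar (Suc m') * qpoch tvar d)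
              * (1 - tvar ^ Suc d)"
        by (simp only: qpoch_tvar_Suc[of m'] qpoch_tvar_Suc[of d]) (simp add: algebra_simps)
      also have "\<dots> = qpoch tvar n * (1 - tvar ^ Suc n)"
        unfolding IH1 IH2 by (simp add: n algebra_simps power_add)
      finally show ?thesis by (simp add: qpoch_tvar_Suc)
    qed
  qed
qed

lemma qbinom_eq_gauss_binom: "qbinom (int n) (int m) = gauss_binom n m"
proof (cases "m \<le> n")
  case True
  have "qpoch tvar n = gauss_binom n m * (qpoch tvar m * qpoch tvar (n - m))"
    using gauss_binom_mult_qpoch[OF True] by (simp add: mult.assoc)
  with True show ?thesis
    by (simp add: qbinom_def qpoch_tvar_neq_0 nat_diff_distrib)
next
  case False
  then show ?thesis by (simp add: qbinom_def gauss_binom_eq_0)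
qed

lemma gauss_binom_Suc_Suc':
  assumes "m \<le> n"
  shows "gauss_binom (Suc n) (Suc m) = tvar ^ (n - m) * gauss_binom n m + gauss_binom n (Suc m)"
proof (cases "m = n")
  case True
  then show ?thesis by (simp add: gauss_binom_eq_0)
next
  case False
  with assms obtain d where d: "n - m = Suc d" and n: "n = m + Suc d"
    by (metis Suc_diff_Suc le_add_diff_inverse le_neq_implies_less)
  have "gauss_binom (Suc n) (Suc m) * (qpoch tvar (Suc m) * qpoch tvar (Suc d))
      = qpoch tvar (Suc n)"
    using gauss_binom_mult_qpoch[of "Suc m" "Suc n"] d n by (simp add: mult.assoc)
  also have "\<dots> = tvar ^ Suc d * qpoch tvar n * (1 - tvar ^ Suc m)
      + qpoch tvar n * (1 - tvar ^ Suc d)"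
    by (simp add: qpoch_tvar_Suc n algebra_simps power_add)
  also have "\<dots> = tvar ^ Suc d * (gauss_binom n m * qpoch tvar m * qpoch tvar (Suc d))
        * (1 - tvar ^ Suc m)
      + (gauss_binom n (Suc m) * qpoch tvar (Suc m) * qpoch tvar d) * (1 - tvar ^ Suc d)"
    using gauss_binom_mult_qpoch[of m n] gauss_binom_mult_qpoch[of "Suc m" n] d n by simp
  also have "\<dots> = (tvar ^ (n - m) * gauss_binom n m + gauss_binom n (Suc m))
      * (qpoch tvar (Suc m) * qpoch tvar (Suc d))"
    by (simp only: d qpoch_tvar_Suc[of m] qpoch_tvar_Suc[of d]) (simp add: algebra_simps)
  finally show ?thesis
    by (simp add: qpoch_tvar_neq_0)
qed

lemma gauss_binom_ratio:
  "gauss_binom k i * (1 - tvar ^ (k - i)) = gauss_binom k (Suc i) * (1 - tvar ^ Suc i)"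
proof (cases "i \<le> k")
  case True
  from gauss_binom_Suc_Suc'[OF True]
  have "gauss_binom k i + tvar ^ Suc i * gauss_binom k (Suc i)
      = tvar ^ (k - i) * gauss_binom k i + gauss_binom k (Suc i)"
    by simp
  then show ?thesis by (simp add: algebra_simps)
next
  case False
  then show ?thesis by (simp add: gauss_binom_eq_0)
qed

lemma gauss_binom_vandermonde:
  "gauss_binom (a + b) c
     = (\<Sum>i\<le>c. tvar ^ (i * (b + i - c)) * gauss_binom a i * gauss_binom b (c - i))"
proof (induction b arbitrary: c)
  case 0
  have "(\<Sum>i\<le>c. tvar ^ (i * (i - c)) * gauss_binom a i * gauss_binom 0 (c - i)) = gauss_binom a c"
    by (subst sum.remove[of _ c]) (auto simp: gauss_binom_eq_0 intro!: sum.neutral)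
  then show ?case by simp
next
  case (Suc b)
  show ?case
  proof (cases c)
    case 0
    then show ?thesis by simp
  next
    case (Suc d)
    have "gauss_binom (a + Suc b) (Suc d)
        = gauss_binom (a + b) d + tvar ^ Suc d * gauss_binom (a + b) (Suc d)"
      by simp
    also have "\<dots> = (\<Sum>i\<le>d. tvar ^ (i * (b + i - d)) * gauss_binom a i * gauss_binom b (d - i)
          + tvar ^ Suc d
            * (tvar ^ (i * (b + i - Suc d)) * gauss_binom a i * gauss_binom b (Suc d - i)))
        + tvar ^ Suc d * (tvar ^ (Suc d * b) * gauss_binom a (Suc d))"
      unfolding Suc.IH by (simp add: sum.distrib sum_distrib_left distrib_left)
    also have "\<dots> = (\<Sum>i\<le>d. tvar ^ (i * (Suc b + i - Suc d))
            * gauss_binom a i * gauss_binom (Suc b) (Suc d - i))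
        + tvar ^ (Suc d * (Suc b + Suc d - Suc d))
            * gauss_binom a (Suc d) * gauss_binom (Suc b) (Suc d - Suc d)"
    proof (rule arg_cong2[where f = "(+)"], rule sum.cong)
      fix i
      assume "i \<in> {..d}"
      then have pascal: "gauss_binom (Suc b) (Suc d - i)
          = gauss_binom b (d - i) + tvar ^ (Suc d - i) * gauss_binom b (Suc d - i)"
        by (simp add: Suc_diff_le)
      have "tvar ^ Suc d * tvar ^ (i * (b + i - Suc d)) * gauss_binom b (Suc d - i)
          = tvar ^ (i * (b + i - d)) * tvar ^ (Suc d - i) * gauss_binom b (Suc d - i)"
      proof (intro mult_gauss_binom_cong)
        assume "Suc d - i \<le> b"
        with \<open>i \<in> {..d}\<close> obtain e where e: "b + i = Suc d + e"
          by (metis atMost_iff le_Suc_ex le_diff_conv)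
        with \<open>i \<in> {..d}\<close> have "Suc d + i * (b + i - Suc d) = i * (b + i - d) + (Suc d - i)"
          by (simp add: algebra_simps)
        then show "tvar ^ Suc d * tvar ^ (i * (b + i - Suc d))
            = tvar ^ (i * (b + i - d)) * tvar ^ (Suc d - i)"
          by (metis power_add)
      qed
      then show "tvar ^ (i * (b + i - d)) * gauss_binom a i * gauss_binom b (d - i)
          + tvar ^ Suc d
            * (tvar ^ (i * (b + i - Suc d)) * gauss_binom a i * gauss_binom b (Suc d - i))
        = tvar ^ (i * (Suc b + i - Suc d)) * gauss_binom a i * gauss_binom (Suc b) (Suc d - i)"
        unfolding pascal by (simp add: algebra_simps)
    qed (simp_all add: power_add [symmetric])
    finally show ?thesis using Suc by simp
  qed
qed

lemma gauss_binom_vandermonde_split: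
  "gauss_binom (k + Suc l) (Suc l)
     = (\<Sum>i\<le>l. tvar ^ (i * i + i) * gauss_binom k i * gauss_binom l (l - i))
       + (\<Sum>i\<le>Suc l. tvar ^ (i * i) * gauss_binom k i * gauss_binom l (Suc l - i))"
proof -
  have pascal: "gauss_binom (Suc l) (Suc l - i)
      = tvar ^ i * gauss_binom l (l - i) + gauss_binom l (Suc l - i)"
    if "i \<le> l" for i
    using that gauss_binom_Suc_Suc'[of "l - i" l] by (simp add: Suc_diff_le)
  have "gauss_binom (k + Suc l) (Suc l)
      = (\<Sum>i\<le>Suc l. tvar ^ (i * i) * gauss_binom k i * gauss_binom (Suc l) (Suc l - i))"
    unfolding gauss_binom_vandermonde by simp
  also have "\<dots> = (\<Sum>i\<le>l. tvar ^ (i * i + i) * gauss_binom k i * gauss_binom l (l - i)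
        + tvar ^ (i * i) * gauss_binom k i * gauss_binom l (Suc l - i))
      + tvar ^ (Suc l * Suc l) * gauss_binom k (Suc l)"
    by (auto simp: pascal power_add algebra_simps intro!: sum.cong)
  finally show ?thesis
    by (simp add: sum.distrib add.assoc)
qed

(* The inner sum of the statement is inner_sum (k + 1 - i) i (l - i); keeping the exponent e free
   makes inner_sum_Suc_index hold without side conditions. *)
definition inner_sum :: "nat \<Rightarrow> nat \<Rightarrow> nat \<Rightarrow> int poly" where
  "inner_sum e i m = (\<Sum>j\<le>m. tvar ^ (j * e) * gauss_binom (i + j - 1) j)"

lemma inner_sum_0 [simp]: "inner_sum e i 0 = 1"
  by (simp add: inner_sum_def)

lemma inner_sum_Suc:
  "inner_sum e i (Suc m) = inner_sum e i m + tvar ^ (Suc m * e) * gauss_binom (i + m) (Suc m)"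
  by (simp add: inner_sum_def)

lemma inner_sum_index_0: "inner_sum e 0 m = 1"
  by (induction m) (simp_all add: inner_sum_Suc gauss_binom_eq_0)

lemma inner_sum_Suc_index:
  "(1 - tvar ^ e) * inner_sum e (Suc i) m
     = inner_sum (Suc e) i (Suc m) - tvar ^ (Suc m * e) * gauss_binom (Suc (i + m)) (Suc m)"
proof (induction m)
  case 0
  then show ?case by (simp add: inner_sum_Suc algebra_simps)
next
  case (Suc m)
  let ?X = "gauss_binom (Suc (i + m)) (Suc m)"
  have "(1 - tvar ^ e) * inner_sum e (Suc i) (Suc m)
      = (1 - tvar ^ e) * inner_sum e (Suc i) m + (1 - tvar ^ e) * tvar ^ (Suc m * e) * ?X"
    by (simp add: inner_sum_Suc algebra_simps)
  also have "\<dots> = inner_sum (Suc e) i (Suc m) - tvar ^ (Suc (Suc m) * e) * ?X"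
    unfolding Suc.IH by (simp add: algebra_simps power_add del: gauss_binom.simps)
  also have "\<dots> = inner_sum (Suc e) i (Suc (Suc m))
      - tvar ^ (Suc (Suc m) * e) * gauss_binom (Suc (i + Suc m)) (Suc (Suc m))"
    by (simp add: inner_sum_Suc algebra_simps power_add)
  finally show ?case .
qed

definition A_coeff :: "nat \<Rightarrow> nat \<Rightarrow> nat \<Rightarrow> int poly" where
  "A_coeff k l i = gauss_binom k i * inner_sum (k + 1 - i) i (l - i)"

definition A_closed :: "nat \<Rightarrow> nat \<Rightarrow> int poly" where
  "A_closed k l = (\<Sum>i\<le>l. tvar ^ (i * (k + l + 1)) * A_coeff k l i)"

lemma A_coeff_Suc_index:
  assumes "i < l"
  shows "(1 - tvar ^ Suc i) * A_coeff k l (Suc i)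
       = A_coeff k l i - tvar ^ ((k - i) * (l - i)) * gauss_binom k i * gauss_binom l (l - i)"
proof (cases "i \<le> k")
  case True
  have "(1 - tvar ^ Suc i) * A_coeff k l (Suc i)
      = gauss_binom k (Suc i) * (1 - tvar ^ Suc i) * inner_sum (k - i) (Suc i) (l - Suc i)"
    by (simp add: A_coeff_def ac_simps)
  also have "\<dots> = gauss_binom k i * ((1 - tvar ^ (k - i)) * inner_sum (k - i) (Suc i) (l - Suc i))"
    by (simp only: gauss_binom_ratio [symmetric] mult.assoc)
  also have "\<dots> = gauss_binom k i
      * (inner_sum (Suc (k - i)) i (l - i) - tvar ^ ((l - i) * (k - i)) * gauss_binom l (l - i))"
    using inner_sum_Suc_index[of "k - i" i "l - Suc i"] assms by (simp add: Suc_diff_Suc)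
  finally show ?thesis
    using True by (simp add: A_coeff_def Suc_diff_le algebra_simps)
next
  case False
  then show ?thesis by (simp add: A_coeff_def gauss_binom_eq_0)
qed

lemma A_closed_telescope:
  "(\<Sum>i\<le>l. tvar ^ (i * (k + l + 2)) * A_coeff k l i) - (1 - tvar ^ (k + Suc l)) * A_closed k l
   = tvar ^ (Suc l * (k + 1))
     * (\<Sum>i\<le>l. tvar ^ (i * i + i) * gauss_binom k i * gauss_binom l (l - i))"
proof -
  define N where "N = k + Suc l"
  define u where "u i = tvar ^ (i * N) * (1 - tvar ^ i) * A_coeff k l i" for i
  define v where "v i = tvar ^ ((i + 1) * N) * A_coeff k l i" for i
  define g
    where "g i = tvar ^ ((i + 1) * N + (k - i) * (l - i)) * gauss_binom k i * gauss_binom l (l - i)"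
    for i
  have u_Suc: "u (Suc i) = v i - g i" if "i < l" for i
  proof -
    have "u (Suc i) = tvar ^ ((i + 1) * N) * ((1 - tvar ^ Suc i) * A_coeff k l (Suc i))"
      by (simp add: u_def ac_simps)
    then show ?thesis
      unfolding A_coeff_Suc_index[OF that]
      by (simp add: v_def g_def right_diff_distrib power_add mult.assoc)
  qed
  have "(\<Sum>i\<le>l. tvar ^ (i * (k + l + 2)) * A_coeff k l i) - (1 - tvar ^ N) * A_closed k l
      = (\<Sum>i\<le>l. v i - u i)"
  proof -
    have exp: "i * (k + l + 2) = i * N + i" for i
      by (simp add: N_def algebra_simps)
    have closed: "A_closed k l = (\<Sum>i\<le>l. tvar ^ (i * N) * A_coeff k l i)"
      by (simp add: A_closed_def N_def)
    show ?thesis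
      unfolding exp closed sum_distrib_left sum_subtractf [symmetric]
      by (intro sum.cong) (simp_all add: u_def v_def power_add algebra_simps)
  qed
  also have "\<dots> = (\<Sum>i\<le>l. v i) - (\<Sum>i<l. v i - g i)"
  proof -
    have "(\<Sum>i\<le>l. u i) = (\<Sum>i<l. u (Suc i))"
      by (simp add: sum.atMost_shift u_def)
    also have "\<dots> = (\<Sum>i<l. v i - g i)"
      by (rule sum.cong) (simp_all add: u_Suc)
    finally show ?thesis
      by (simp add: sum_subtractf)
  qed
  also have "\<dots> = (\<Sum>i\<le>l. g i)"
    by (simp add: sum_subtractf lessThan_Suc_atMost [symmetric] v_def g_def A_coeff_def)
  also have "\<dots> = tvar ^ (Suc l * (k + 1))
      * (\<Sum>i\<le>l. tvar ^ (i * i + i) * gauss_binom k i * gauss_binom l (l - i))"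
    unfolding sum_distrib_left
  proof (rule sum.cong)
    fix i
    assume "i \<in> {..l}"
    then have "i \<le> k \<Longrightarrow> (i + 1) * N + (k - i) * (l - i) = Suc l * (k + 1) + (i * i + i)"
      by (auto simp: N_def algebra_simps le_iff_add)
    then have exp: "tvar ^ ((i + 1) * N + (k - i) * (l - i)) * gauss_binom k i
        = tvar ^ (Suc l * (k + 1)) * tvar ^ (i * i + i) * gauss_binom k i"
      by (intro mult_gauss_binom_cong) (simp add: power_add)
    show "g i
        = tvar ^ (Suc l * (k + 1)) * (tvar ^ (i * i + i) * gauss_binom k i * gauss_binom l (l - i))"
      unfolding g_def exp by (simp only: mult.assoc)
  qed simp
  finally show ?thesis by (simp add: N_def)
qed

lemma A_coeff_Suc:
  assumes "i \<le> l"
  shows "A_coeff k (Suc l) i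
       = A_coeff k l i
         + tvar ^ ((Suc l - i) * (k + 1 - i)) * gauss_binom k i * gauss_binom l (Suc l - i)"
  using assms by (simp add: A_coeff_def Suc_diff_le inner_sum_Suc algebra_simps)

lemma A_closed_Suc_split:
  "A_closed k (Suc l) = (\<Sum>i\<le>l. tvar ^ (i * (k + l + 2)) * A_coeff k l i)
     + tvar ^ (Suc l * (k + 1))
       * (\<Sum>i\<le>Suc l. tvar ^ (i * i) * gauss_binom k i * gauss_binom l (Suc l - i))"
proof -
  have split: "tvar ^ (i * (k + l + 2)) * A_coeff k (Suc l) i
      = tvar ^ (i * (k + l + 2)) * A_coeff k l i
        + tvar ^ (Suc l * (k + 1)) * (tvar ^ (i * i) * gauss_binom k i * gauss_binom l (Suc l - i))"
    if "i \<le> l" for i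
  proof -
    from that have "i \<le> k \<Longrightarrow> i * (k + l + 2) + (Suc l - i) * (k + 1 - i) = Suc l * (k + 1) + i * i"
      by (auto simp: algebra_simps le_iff_add)
    then have exp: "tvar ^ (i * (k + l + 2)) * tvar ^ ((Suc l - i) * (k + 1 - i)) * gauss_binom k i
        = tvar ^ (Suc l * (k + 1)) * tvar ^ (i * i) * gauss_binom k i"
      by (intro mult_gauss_binom_cong) (simp add: power_add [symmetric])
    show ?thesis
      using exp by (simp add: A_coeff_Suc[OF that] distrib_left mult.assoc [symmetric])
  qed
  have last: "tvar ^ (Suc l * (k + l + 2)) * A_coeff k (Suc l) (Suc l)
      = tvar ^ (Suc l * (k + 1))
        * (tvar ^ (Suc l * Suc l) * gauss_binom k (Suc l) * gauss_binom l 0)"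
  proof -
    have "Suc l * (k + l + 2) = Suc l * (k + 1) + Suc l * Suc l"
      by (simp add: algebra_simps)
    then show ?thesis
      by (simp add: A_coeff_def power_add mult.assoc)
  qed
  have "A_closed k (Suc l) = (\<Sum>i\<le>l. tvar ^ (i * (k + l + 2)) * A_coeff k (Suc l) i)
      + tvar ^ (Suc l * (k + l + 2)) * A_coeff k (Suc l) (Suc l)"
    by (simp add: A_closed_def)
  also have "\<dots> = (\<Sum>i\<le>l. tvar ^ (i * (k + l + 2)) * A_coeff k l i
        + tvar ^ (Suc l * (k + 1)) * (tvar ^ (i * i) * gauss_binom k i * gauss_binom l (Suc l - i)))
      + tvar ^ (Suc l * (k + 1))
        * (tvar ^ (Suc l * Suc l) * gauss_binom k (Suc l) * gauss_binom l 0)"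
    unfolding last by (intro arg_cong2[where f = "(+)"] sum.cong refl) (simp only: atMost_iff split)
  finally show ?thesis
    by (simp add: sum.distrib sum_distrib_left distrib_left add.assoc)
qed

lemma A_closed_Suc:
  "A_closed k (Suc l) = (1 - tvar ^ (k + Suc l)) * A_closed k l
     + tvar ^ (Suc l * (k + 1)) * gauss_binom (k + Suc l) (Suc l)"
proof -
  from A_closed_telescope[of k l]
  have "(\<Sum>i\<le>l. tvar ^ (i * (k + l + 2)) * A_coeff k l i)
      = tvar ^ (Suc l * (k + 1))
          * (\<Sum>i\<le>l. tvar ^ (i * i + i) * gauss_binom k i * gauss_binom l (l - i))
        + (1 - tvar ^ (k + Suc l)) * A_closed k l"
    by (simp only: diff_eq_eq)
  then show ?thesis
    unfolding A_closed_Suc_split gauss_binom_vandermonde_split by (simp only: distrib_left add_ac)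
qed

lemma A_eq_A_closed: "A k l = A_closed k l"
proof (induction l)
  case 0
  then show ?case by (simp add: A_closed_def A_coeff_def)
next
  case (Suc l)
  then show ?case by (simp only: A.simps A_closed_Suc qbinom_eq_gauss_binom)
qed

lemma A_coeff_eq_qbinom_sum:
  assumes "1 \<le> i"
  shows "A_coeff k l i = qbinom (int k) (int i) *
           (\<Sum>j=0..l-i. tvar ^ nat (int j * (int k - int i + 1))
              * qbinom (int i + int j - 1) (int j))"
proof (cases "i \<le> k")
  case True
  have "tvar ^ nat (int j * (int k - int i + 1)) * qbinom (int i + int j - 1) (int j)
      = tvar ^ (j * (k + 1 - i)) * gauss_binom (i + j - 1) j" for j
  proof -
    have "int j * (int k - int i + 1) = int (j * (k + 1 - i))"
      using True by (simp add: of_nat_diff)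
    moreover have "int i + int j - 1 = int (i + j - 1)"
      using assms by simp
    ultimately show ?thesis
      by (simp only: nat_int qbinom_eq_gauss_binom)
  qed
  then show ?thesis
    by (simp add: A_coeff_def inner_sum_def qbinom_eq_gauss_binom atLeast0AtMost)
next
  case False
  then show ?thesis
    by (simp add: A_coeff_def qbinom_eq_gauss_binom gauss_binom_eq_0)
qed

theorem lemma2:
  fixes k l :: nat
  shows "A k l = 1 + (\<Sum>i=1..l. tvar ^ (i * (k + l + 1)) * qbinom (int k) (int i) *
           (\<Sum>j=0..l-i. tvar ^ nat ((int j) * (int k - int i + 1))
              * qbinom (int i + int j - 1) (int j)))"
proof -
  have "A k l = (\<Sum>i=0..l. tvar ^ (i * (k + l + 1)) * A_coeff k l i)"
    by (simp add: A_eq_A_closed A_closed_def atLeast0AtMost)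
  also have "\<dots> = 1 + (\<Sum>i=1..l. tvar ^ (i * (k + l + 1)) * A_coeff k l i)"
    by (simp add: sum.atLeast_Suc_atMost A_coeff_def inner_sum_index_0)
  finally show ?thesis
    by (simp add: A_coeff_eq_qbinom_sum mult.assoc)
qed

end
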